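(* Let $\Omega\subset\mathbb{R}^n$ be a circumscribed convex polytope, i.e. a convex polytope with non-empty interior for which there exists a ball contained in $\Omega$ that meets every facet (side) of $\Omega$. Then for all $\varepsilon\in[0,\mathrm{In}(\Omega)]$, $$\mathrm{vol}(L_\varepsilon(\Omega))=\mathrm{vol}(\Omega)\left(1-\Big(1-\frac{\varepsilon}{\mathrm{In}(\Omega)}\Big)^{n}\right).$$
   Context: $\mathrm{vol}$ is $n$-dimensional Lebesgue measure. $\mathrm{In}(\Omega)$ is the inradius of $\Omega$: the radius of the largest ball contained in $\Omega$. The $\varepsilon$-inner neighbourhood is $L_\varepsilon(\Omega)=\{x\in\Omega:\|x-y\|\le\varepsilon\text{ for some }y\in\partial\Omega\}$. *)

theory Defs
  imports "HOL-Analysis.Analysis"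
begin

definition inradius :: "'a::euclidean_space set \<Rightarrow> real" where
  "inradius S = Sup {r. r \<ge> 0 \<and> (\<exists>x. cball x r \<subseteq> S)}"

definition inner_nbhd :: "real \<Rightarrow> 'a::euclidean_space set \<Rightarrow> 'a set" where
  "inner_nbhd e S = {x \<in> S. \<exists>y \<in> frontier S. dist x y \<le> e}"

definition circumscribed_polytope :: "'a::euclidean_space set \<Rightarrow> bool" where
  "circumscribed_polytope P \<longleftrightarrow> polytope P \<and> interior P \<noteq> {} \<and>
     (\<exists>c r. r > 0 \<and> cball c r \<subseteq> P \<and> (\<forall>F. F facet_of P \<longrightarrow> cball c r \<inter> F \<noteq> {}))"

end

theory Submission
  imports Defs
begin

(* Let B(c,r) be a ball in P meeting every facet. Each facet hyperplane is then tangent to its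
   boundary sphere, so P = {x. u \<bullet> (x - c) \<le> r for all u \<in> U} for a finite set U of unit
   normals, and In(P) = r. A point of P lies within e of the boundary iff u \<bullet> (x - c) \<ge> r - e
   for some u \<in> U. Hence P minus the inner neighbourhood is the open polytope
   {x. u \<bullet> (x - c) < r - e for all u \<in> U}, the image of the interior of P under the homothety
   with centre c and ratio 1 - e/r, and its volume is (1 - e/r)^n vol P. *)

definition tangential_polyhedron :: "'a::real_inner set \<Rightarrow> 'a \<Rightarrow> real \<Rightarrow> 'a set" where
  "tangential_polyhedron U c r = {x. \<forall>u\<in>U. u \<bullet> (x - c) \<le> r}"

lemma closed_tangential_polyhedron:
  fixes U :: "'a::euclidean_space set"
  shows "closed (tangential_polyhedron U c r)"
proof -
  have "tangential_polyhedron U c r = (\<Inter>u\<in>U. {x. u \<bullet> x \<le> r + u \<bullet> c})"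
    by (auto simp: tangential_polyhedron_def inner_diff_right algebra_simps)
  then show ?thesis
    by (auto intro!: closed_INT closed_halfspace_le)
qed

lemma lmeasurable_tangential_polyhedron:
  fixes U :: "'a::euclidean_space set"
  assumes "bounded (tangential_polyhedron U c r)"
  shows "tangential_polyhedron U c r \<in> lmeasurable"
  by (rule lmeasurable_compact)
    (simp add: compact_eq_bounded_closed assms closed_tangential_polyhedron)

lemma open_strict_tangential_polyhedron:
  fixes U :: "'a::euclidean_space set"
  assumes "finite U"
  shows "open {x. \<forall>u\<in>U. u \<bullet> (x - c) < r}"
proof -
  have "{x. \<forall>u\<in>U. u \<bullet> (x - c) < r} = (\<Inter>u\<in>U. {x. u \<bullet> x < r + u \<bullet> c})"
    by (auto simp: inner_diff_right algebra_simps)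
  then show ?thesis
    using assms by (auto intro!: open_INT open_halfspace_lt)
qed

lemma cball_subset_tangential_polyhedron:
  fixes U :: "'a::euclidean_space set"
  assumes "U \<subseteq> sphere 0 1"
  shows "cball c r \<subseteq> tangential_polyhedron U c r"
proof
  fix x
  assume "x \<in> cball c r"
  then have x: "norm (x - c) \<le> r"
    by (simp add: dist_norm norm_minus_commute)
  have "u \<bullet> (x - c) \<le> r" if "u \<in> U" for u
    using norm_cauchy_schwarz[of u "x - c"] x assms that by auto
  then show "x \<in> tangential_polyhedron U c r"
    by (simp add: tangential_polyhedron_def)
qed

lemma bounded_tangential_polyhedron_ex_normal:
  fixes U :: "'a::euclidean_space set"
  assumes bounded: "bounded (tangential_polyhedron U c r)" and "0 \<le> r"
  shows "\<exists>u\<in>U. 0 \<le> u \<bullet> v"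
proof (rule ccontr)
  assume "\<not> ?thesis"
  then have neg: "\<And>u. u \<in> U \<Longrightarrow> u \<bullet> v < 0"
    by auto
  have ray: "c + t *\<^sub>R v \<in> tangential_polyhedron U c r" if "0 \<le> t" for t
    using neg \<open>0 \<le> r\<close> that
    by (force simp: tangential_polyhedron_def intro: order_trans[OF mult_nonneg_nonpos])
  obtain B where B: "\<And>x. x \<in> tangential_polyhedron U c r \<Longrightarrow> norm x \<le> B"
    using bounded bounded_iff by blast
  show False
  proof (cases "v = 0")
    case True
    then have "tangential_polyhedron U c r = UNIV"
      using neg by (force simp: tangential_polyhedron_def)
    then show False
      using bounded by simp
  next
    case False
    define t where "t = (B + norm c + 1) / norm v"
    have "norm c \<le> B"
      using B ray[of 0] by simp
    then have "0 < B + norm c + 1"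
      using norm_ge_zero[of c] by linarith
    then have "0 \<le> t" and "norm (t *\<^sub>R v) = B + norm c + 1"
      using False by (simp_all add: t_def)
    moreover have "norm (t *\<^sub>R v) \<le> norm (c + t *\<^sub>R v) + norm c"
      by (metis add_diff_cancel_left' norm_triangle_ineq4 add.commute)
    ultimately show False
      using B ray by fastforce
  qed
qed

lemma inradius_tangential_polyhedron:
  fixes U :: "'a::euclidean_space set"
  assumes unit: "U \<subseteq> sphere 0 1" and bounded: "bounded (tangential_polyhedron U c r)"
    and "0 \<le> r"
  shows "inradius (tangential_polyhedron U c r) = r"
  unfolding inradius_def
proof (rule cSup_eq_maximum)
  show "r \<in> {\<rho>. 0 \<le> \<rho> \<and> (\<exists>x. cball x \<rho> \<subseteq> tangential_polyhedron U c r)}"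
    using cball_subset_tangential_polyhedron[OF unit] \<open>0 \<le> r\<close> by auto
next
  fix \<rho>
  assume "\<rho> \<in> {\<rho>. 0 \<le> \<rho> \<and> (\<exists>x. cball x \<rho> \<subseteq> tangential_polyhedron U c r)}"
  then obtain x where "0 \<le> \<rho>" and ball: "cball x \<rho> \<subseteq> tangential_polyhedron U c r"
    by auto
  obtain u where u: "u \<in> U" "0 \<le> u \<bullet> (x - c)"
    using bounded_tangential_polyhedron_ex_normal[OF bounded \<open>0 \<le> r\<close>] by blast
  have "u \<bullet> u = 1"
    using u(1) unit by (auto simp: power2_norm_eq_inner[symmetric])
  have "x + \<rho> *\<^sub>R u \<in> cball x \<rho>"
    using u(1) unit \<open>0 \<le> \<rho>\<close> by (auto simp: dist_norm)
  then have "u \<bullet> (x + \<rho> *\<^sub>R u - c) \<le> r"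
    using ball u(1) by (auto simp: tangential_polyhedron_def)
  then show "\<rho> \<le> r"
    using u(2) \<open>u \<bullet> u = 1\<close> by (simp add: inner_diff_right inner_add_right)
qed

lemma tangential_polyhedron_facet_point_in_frontier:
  fixes U :: "'a::euclidean_space set"
  assumes "y \<in> tangential_polyhedron U c r" "u \<in> U" "u \<noteq> 0" "u \<bullet> (y - c) = r"
  shows "y \<in> frontier (tangential_polyhedron U c r)"
proof -
  have "y \<notin> interior (tangential_polyhedron U c r)"
  proof
    assume "y \<in> interior (tangential_polyhedron U c r)"
    then obtain d where "0 < d" and ball: "ball y d \<subseteq> tangential_polyhedron U c r"
      by (meson open_contains_ball open_interior interior_subset subset_trans)
    define z where "z = y + (d / (2 * norm u)) *\<^sub>R u"
    have "z \<in> ball y d"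
      using \<open>0 < d\<close> \<open>u \<noteq> 0\<close> by (simp add: z_def dist_norm)
    then have "u \<bullet> (z - c) \<le> r"
      using ball \<open>u \<in> U\<close> by (auto simp: tangential_polyhedron_def)
    moreover have "u \<bullet> (z - c) = r + d * norm u / 2"
      using assms(3,4) by (simp add: z_def inner_diff_right inner_add_right
          power2_norm_eq_inner[symmetric] power2_eq_square)
    moreover have "0 < d * norm u"
      using \<open>0 < d\<close> \<open>u \<noteq> 0\<close> by simp
    ultimately show False
      by linarith
  qed
  then show ?thesis
    using assms(1) closure_subset by (auto simp: frontier_def)
qed

lemma inner_nbhd_tangential_polyhedron:
  fixes U :: "'a::euclidean_space set"
  assumes "finite U" and unit: "U \<subseteq> sphere 0 1"
  shows "inner_nbhd e (tangential_polyhedron U c r)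
           = tangential_polyhedron U c r - {x. \<forall>u\<in>U. u \<bullet> (x - c) < r - e}"
    (is "inner_nbhd e ?P = ?P - ?G")
proof (intro set_eqI iffI)
  fix x
  assume "x \<in> inner_nbhd e ?P"
  then obtain y where x: "x \<in> ?P" and y: "y \<in> frontier ?P" "dist x y \<le> e"
    unfolding inner_nbhd_def by auto
  have "x \<notin> ?G"
  proof
    assume xG: "x \<in> ?G"
    have "u \<bullet> (y - c) < r" if "u \<in> U" for u
    proof -
      have "u \<bullet> (y - x) \<le> norm u * norm (y - x)"
        by (rule norm_cauchy_schwarz)
      also have "\<dots> \<le> e"
        using that unit y(2) by (auto simp: dist_norm norm_minus_commute)
      finally show ?thesis
        using xG that by (force simp: inner_diff_right)
    qed
    moreover have "{x. \<forall>u\<in>U. u \<bullet> (x - c) < r} \<subseteq> interior ?P"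
      by (rule interior_maximal)
        (auto simp: tangential_polyhedron_def open_strict_tangential_polyhedron[OF \<open>finite U\<close>]
          intro: less_imp_le)
    ultimately have "y \<in> interior ?P"
      by blast
    then show False
      using y(1) by (simp add: frontier_def)
  qed
  then show "x \<in> ?P - ?G"
    using x by blast
next
  fix x
  assume "x \<in> ?P - ?G"
  then obtain u where x: "x \<in> ?P" and u: "u \<in> U" "r - e \<le> u \<bullet> (x - c)"
    by auto
  have uu: "u \<bullet> u = 1"
    using u(1) unit by (auto simp: power2_norm_eq_inner[symmetric])
  \<comment> \<open>y is the foot of x on the facet hyperplane with normal u; if y lies outside P,
    the segment from x to y leaves P even earlier\<close>
  define s where "s = r - u \<bullet> (x - c)"
  define y where "y = x + s *\<^sub>R u"
  have s: "0 \<le> s" "s \<le> e"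
    using x u by (auto simp: s_def tangential_polyhedron_def)
  have dist_xy: "dist x y = s"
    using s u(1) unit by (auto simp: y_def dist_norm)
  have "\<exists>z\<in>frontier ?P. dist x z \<le> e"
  proof (cases "y \<in> ?P")
    case True
    have "u \<bullet> (y - c) = r"
      using uu by (simp add: y_def s_def inner_diff_right inner_add_right)
    moreover have "u \<noteq> 0"
      using uu by auto
    ultimately have "y \<in> frontier ?P"
      using tangential_polyhedron_facet_point_in_frontier[OF True u(1)] by blast
    then show ?thesis
      using dist_xy s by auto
  next
    case False
    have "closed_segment x y \<inter> frontier ?P \<noteq> {}"
      by (rule connected_Int_frontier) (use x False in auto)
    then obtain z where z: "z \<in> closed_segment x y" "z \<in> frontier ?P"
      by auto
    then have "dist x z \<le> e"
      using dist_in_closed_segment[OF z(1)] dist_xy s by (simp add: dist_commute)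
    then show ?thesis
      using z(2) by blast
  qed
  then show "x \<in> inner_nbhd e ?P"
    using x unfolding inner_nbhd_def by auto
qed

lemma measure_strict_tangential_polyhedron:
  fixes U :: "'a::euclidean_space set"
  assumes "finite U" "0 \<notin> U" and bounded: "bounded (tangential_polyhedron U c r)"
  shows "measure lebesgue {x. \<forall>u\<in>U. u \<bullet> (x - c) < r}
           = measure lebesgue (tangential_polyhedron U c r)"
    (is "measure lebesgue ?G = measure lebesgue ?P")
proof (rule measure_negligible_symdiff)
  show "?P \<in> lmeasurable"
    by (rule lmeasurable_tangential_polyhedron[OF bounded])
  have "?P - ?G \<union> (?G - ?P) \<subseteq> (\<Union>u\<in>U. {x. u \<bullet> x = r + u \<bullet> c})"
    by (force simp: tangential_polyhedron_def inner_diff_right)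
  moreover have "negligible (\<Union>u\<in>U. {x. u \<bullet> x = r + u \<bullet> c})"
    using assms(1,2) by (auto intro!: negligible_Union negligible_hyperplane)
  ultimately show "negligible (?P - ?G \<union> (?G - ?P))"
    by (rule negligible_subset[rotated])
qed

lemma strict_tangential_polyhedron_homothety:
  fixes U :: "'a::real_inner set"
  assumes "0 < t"
  shows "(\<lambda>x. t *\<^sub>R x + (1 - t) *\<^sub>R c) ` {x. \<forall>u\<in>U. u \<bullet> (x - c) < r}
           = {x. \<forall>u\<in>U. u \<bullet> (x - c) < t * r}"
proof (intro set_eqI iffI)
  fix x
  assume "x \<in> (\<lambda>x. t *\<^sub>R x + (1 - t) *\<^sub>R c) ` {x. \<forall>u\<in>U. u \<bullet> (x - c) < r}"
  then obtain y where y: "\<forall>u\<in>U. u \<bullet> (y - c) < r" and x: "x - c = t *\<^sub>R (y - c)"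
    by (force simp: algebra_simps)
  show "x \<in> {x. \<forall>u\<in>U. u \<bullet> (x - c) < t * r}"
    using y assms by (simp add: x)
next
  fix x
  assume x: "x \<in> {x. \<forall>u\<in>U. u \<bullet> (x - c) < t * r}"
  define y where "y = c + (1 / t) *\<^sub>R (x - c)"
  have "x = t *\<^sub>R y + (1 - t) *\<^sub>R c"
    using assms by (simp add: y_def algebra_simps)
  moreover have "\<forall>u\<in>U. u \<bullet> (y - c) < r"
    using x assms by (simp add: y_def pos_divide_less_eq mult.commute)
  ultimately show "x \<in> (\<lambda>x. t *\<^sub>R x + (1 - t) *\<^sub>R c) ` {x. \<forall>u\<in>U. u \<bullet> (x - c) < r}"
    by blast
qed

lemma measure_inner_nbhd_tangential_polyhedron:
  fixes U :: "'a::euclidean_space set"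
  assumes "finite U" and unit: "U \<subseteq> sphere 0 1"
    and bounded: "bounded (tangential_polyhedron U c r)"
    and "0 < r" "0 \<le> e" "e \<le> r"
  shows "measure lebesgue (inner_nbhd e (tangential_polyhedron U c r))
           = measure lebesgue (tangential_polyhedron U c r) * (1 - (1 - e / r) ^ DIM('a))"
    (is "_ = measure lebesgue ?P * _")
proof -
  define t where "t = 1 - e / r"
  let ?G = "{x. \<forall>u\<in>U. u \<bullet> (x - c) < t * r}"
  have t: "0 \<le> t" "t * r = r - e"
    using assms(4-6) by (auto simp: t_def field_simps)
  have "?G \<subseteq> ?P"
    using assms(4-6) t by (force simp: tangential_polyhedron_def)
  moreover have "?G \<in> sets lebesgue"
    using open_strict_tangential_polyhedron[OF \<open>finite U\<close>]
    by (simp add: borel_open)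
  moreover have "measure lebesgue ?G = t ^ DIM('a) * measure lebesgue ?P"
  proof (cases "t = 0")
    case True
    have "x \<notin> ?G" for x
      using bounded_tangential_polyhedron_ex_normal[OF bounded, of "x - c"] \<open>0 < r\<close> True
      by (auto simp: not_less)
    then have "?G = {}"
      by blast
    show ?thesis
      unfolding \<open>?G = {}\<close> using True by simp
  next
    case False
    have zero_notin: "0 \<notin> U"
      using unit by auto
    have "0 < t"
      using False t(1) by simp
    then have "measure lebesgue ?G
        = \<bar>t\<bar> ^ DIM('a) * measure lebesgue {x. \<forall>u\<in>U. u \<bullet> (x - c) < r}"
      by (simp only: strict_tangential_polyhedron_homothety[symmetric] measure_lebesgue_affine)
    also have "\<dots> = t ^ DIM('a) * measure lebesgue ?P"
      using measure_strict_tangential_polyhedron[OF \<open>finite U\<close> zero_notin bounded] t(1) by simp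
    finally show ?thesis .
  qed
  moreover have "inner_nbhd e ?P = ?P - ?G"
    using inner_nbhd_tangential_polyhedron[OF \<open>finite U\<close> unit, of e c r] t(2) by simp
  ultimately have "measure lebesgue (inner_nbhd e ?P)
      = measure lebesgue ?P - t ^ DIM('a) * measure lebesgue ?P"
    using measurable_measure_Diff[OF lmeasurable_tangential_polyhedron[OF bounded]] by simp
  then show ?thesis
    by (simp add: t_def right_diff_distrib mult.commute)
qed

lemma halfspace_touching_cball_offset:
  fixes a :: "'a::euclidean_space"
  assumes sub: "cball c r \<subseteq> {x. a \<bullet> x \<le> b}" and touch: "cball c r \<inter> {x. a \<bullet> x = b} \<noteq> {}"
  shows "b = a \<bullet> c + r * norm a"
proof -
  obtain y where "y \<in> cball c r" "a \<bullet> y = b"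
    using touch by blast
  then have y: "dist c y \<le> r" "a \<bullet> y = b"
    by simp_all
  have "a \<bullet> (y - c) \<le> norm a * norm (y - c)"
    by (rule norm_cauchy_schwarz)
  also have "\<dots> \<le> norm a * r"
    using y(1) by (intro mult_left_mono) (auto simp: dist_norm norm_minus_commute)
  finally have upper: "b \<le> a \<bullet> c + r * norm a"
    using y(2) by (simp add: inner_diff_right mult.commute)
  have "0 \<le> r"
    using y(1) zero_le_dist[of c y] by linarith
  then have "c + r *\<^sub>R sgn a \<in> cball c r"
    by (simp add: dist_norm norm_sgn)
  then have "a \<bullet> (c + r *\<^sub>R sgn a) \<le> b"
    using sub by blast
  moreover have "a \<bullet> sgn a = norm a"
    by (cases "a = 0") (simp_all add: sgn_div_norm power2_norm_eq_inner[symmetric] power2_eq_square)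
  ultimately have "a \<bullet> c + r * norm a \<le> b"
    by (simp add: inner_add_right)
  with upper show ?thesis
    by linarith
qed

lemma halfspace_eq_unit_normal_form:
  fixes a :: "'a::euclidean_space"
  assumes "a \<noteq> 0"
  shows "{x. a \<bullet> x \<le> a \<bullet> c + r * norm a} = {x. sgn a \<bullet> (x - c) \<le> r}"
proof -
  have "sgn a \<bullet> (x - c) \<le> r \<longleftrightarrow> a \<bullet> (x - c) \<le> r * norm a" for x
    using assms by (simp add: sgn_div_norm inverse_eq_divide pos_divide_le_eq)
  also have "\<dots> x \<longleftrightarrow> a \<bullet> x \<le> a \<bullet> c + r * norm a" for x
    by (simp add: inner_diff_right diff_le_eq add.commute)
  finally show ?thesis
    by blast
qed

lemma polyhedron_Inter_facet_halfspaces: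
  fixes P :: "'a::euclidean_space set"
  assumes "polyhedron P" "interior P \<noteq> {}"
  obtains F a b where "finite F" "P = \<Inter>F"
    "\<And>h. h \<in> F \<Longrightarrow> a h \<noteq> 0 \<and> h = {x. a h \<bullet> x \<le> b h}"
    "\<And>h. h \<in> F \<Longrightarrow> P \<inter> {x. a h \<bullet> x = b h} facet_of P"
proof -
  have hull: "affine hull P = UNIV"
    by (rule affine_hull_nonempty_interior[OF assms(2)])
  obtain F where "finite F" and seq: "P = affine hull P \<inter> \<Inter>F"
    and halfspaces: "\<forall>h\<in>F. \<exists>a b. a \<noteq> 0 \<and> h = {x. a \<bullet> x \<le> b}"
    and minimal: "\<And>F'. F' \<subset> F \<Longrightarrow> P \<subset> affine hull P \<inter> \<Inter>F'"
    using assms(1) unfolding polyhedron_Int_affine_minimal by blast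
  obtain a b where ab: "\<And>h. h \<in> F \<Longrightarrow> a h \<noteq> 0 \<and> h = {x. a h \<bullet> x \<le> b h}"
    using halfspaces by metis
  show thesis
  proof (rule that[OF \<open>finite F\<close> _ ab])
    show "P = \<Inter>F"
      using seq by (simp only: hull Int_UNIV_left)
    show "P \<inter> {x. a h \<bullet> x = b h} facet_of P" if "h \<in> F" for h
      using facet_of_polyhedron_explicit[OF \<open>finite F\<close> seq ab minimal] that by blast
  qed
qed

lemma circumscribed_polytope_imp_tangential_polyhedron:
  fixes P :: "'a::euclidean_space set"
  assumes "circumscribed_polytope P"
  obtains U c r where "finite U" "U \<subseteq> sphere 0 1" "0 < r" "P = tangential_polyhedron U c r"
proof -
  obtain c r where "0 < r" and ball: "cball c r \<subseteq> P"
    and touch: "\<And>S. S facet_of P \<Longrightarrow> cball c r \<inter> S \<noteq> {}"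
    using assms by (auto simp: circumscribed_polytope_def)
  have "polyhedron P" "interior P \<noteq> {}"
    using assms by (auto simp: circumscribed_polytope_def polytope_imp_polyhedron)
  then obtain F a b where "finite F" and P: "P = \<Inter>F"
    and halfspace: "\<And>h. h \<in> F \<Longrightarrow> a h \<noteq> 0 \<and> h = {x. a h \<bullet> x \<le> b h}"
    and facet: "\<And>h. h \<in> F \<Longrightarrow> P \<inter> {x. a h \<bullet> x = b h} facet_of P"
    by (rule polyhedron_Inter_facet_halfspaces) blast
  have "h = {x. sgn (a h) \<bullet> (x - c) \<le> r}" if "h \<in> F" for h
  proof -
    have "cball c r \<subseteq> {x. a h \<bullet> x \<le> b h}"
      using ball P halfspace that by blast
    moreover have "cball c r \<inter> {x. a h \<bullet> x = b h} \<noteq> {}"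
      using touch[OF facet[OF that]] by blast
    ultimately have "b h = a h \<bullet> c + r * norm (a h)"
      by (rule halfspace_touching_cball_offset)
    then show ?thesis
      using halfspace_eq_unit_normal_form halfspace that by metis
  qed
  then have "P = tangential_polyhedron ((\<lambda>h. sgn (a h)) ` F) c r"
    unfolding P tangential_polyhedron_def by blast
  moreover have "(\<lambda>h. sgn (a h)) ` F \<subseteq> sphere 0 1"
    using halfspace by (auto simp: norm_sgn)
  ultimately show thesis
    using that \<open>finite F\<close> \<open>0 < r\<close> by blast
qed

theorem mainTheorem4:
  fixes P :: "'a::euclidean_space set" and e :: real
  assumes "circumscribed_polytope P"
    and "0 \<le> e" and "e \<le> inradius P"
  shows "measure lebesgue (inner_nbhd e P)
           = measure lebesgue P * (1 - (1 - e / inradius P) ^ DIM('a))"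
proof -
  obtain U c r where U: "finite U" "U \<subseteq> sphere 0 1" and "0 < r"
    and P: "P = tangential_polyhedron U c r"
    using circumscribed_polytope_imp_tangential_polyhedron[OF assms(1)] .
  have "bounded P"
    using assms(1) by (simp add: circumscribed_polytope_def polytope_imp_bounded)
  then have "inradius P = r"
    using inradius_tangential_polyhedron[OF U(2)] \<open>0 < r\<close> P by simp
  then show ?thesis
    using measure_inner_nbhd_tangential_polyhedron[OF U] \<open>bounded P\<close> \<open>0 < r\<close> assms(2,3) P
    by simp
qed

end
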